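(* Let $n\ge 3$ and $1\le k\le n-2$. Then $rc^*(C_n([k]))=src^*(C_n([k]))=\lceil n/k\rceil$, where $[k]=\{1,2,\dots,k\}$.
   Context: For $n\ge 2$ and $S\subseteq\{1,\dots,n-1\}$, the circulant digraph $C_n(S)$ has vertex set $\{v_0,\dots,v_{n-1}\}$ and arcs $v_iv_j$ for all $i,j$ with $j-i\equiv s \pmod n$ for some $s\in S$. For a strongly connected digraph $D$ and an arc-colouring $\Gamma:A(D)\to\{1,\dots,k\}$, a directed path is rainbow if its arcs have pairwise distinct colours. $\Gamma$ is rainbow connected if for every ordered pair of distinct vertices $x,y$ there is a rainbow directed $xy$-path; $rc^*(D)$ is the minimum number of colours of such a colouring. $\Gamma$ is strongly rainbow connected if for every ordered pair of distinct vertices $x,y$ there is a rainbow directed $xy$-path of length $d_D(x,y)$; $src^*(D)$ is the minimum such number. *)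

theory Defs
  imports Complex_Main
begin

definition circulant_verts :: "nat \<Rightarrow> nat set" where
  "circulant_verts n = {0..<n}"

definition circulant_arcs :: "nat \<Rightarrow> nat set \<Rightarrow> (nat \<times> nat) set" where
  "circulant_arcs n S = {(i, j). i < n \<and> j < n \<and> (\<exists>s\<in>S. (int j - int i) mod int n = int s mod int n)}"

definition path_arcs :: "'a list \<Rightarrow> ('a \<times> 'a) list" where
  "path_arcs p = zip p (tl p)"

definition is_dipath :: "'a set \<Rightarrow> ('a \<times> 'a) set \<Rightarrow> 'a list \<Rightarrow> 'a \<Rightarrow> 'a \<Rightarrow> bool" where
  "is_dipath V A p x y \<longleftrightarrow> p \<noteq> [] \<and> hd p = x \<and> last p = y \<and> distinct p \<and>
     set p \<subseteq> V \<and> set (path_arcs p) \<subseteq> A"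

definition path_len :: "'a list \<Rightarrow> nat" where
  "path_len p = length p - 1"

definition didist :: "'a set \<Rightarrow> ('a \<times> 'a) set \<Rightarrow> 'a \<Rightarrow> 'a \<Rightarrow> nat" where
  "didist V A x y = (LEAST l. \<exists>p. is_dipath V A p x y \<and> path_len p = l)"

definition rainbow :: "('a \<times> 'a \<Rightarrow> nat) \<Rightarrow> 'a list \<Rightarrow> bool" where
  "rainbow c p \<longleftrightarrow> distinct (map c (path_arcs p))"

definition arc_colouring :: "('a \<times> 'a) set \<Rightarrow> nat \<Rightarrow> ('a \<times> 'a \<Rightarrow> nat) \<Rightarrow> bool" where
  "arc_colouring A k c \<longleftrightarrow> (\<forall>e\<in>A. c e \<in> {1..k})"

definition rainbow_connected :: "'a set \<Rightarrow> ('a \<times> 'a) set \<Rightarrow> ('a \<times> 'a \<Rightarrow> nat) \<Rightarrow> bool" where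
  "rainbow_connected V A c \<longleftrightarrow>
     (\<forall>x\<in>V. \<forall>y\<in>V. x \<noteq> y \<longrightarrow> (\<exists>p. is_dipath V A p x y \<and> rainbow c p))"

definition strongly_rainbow_connected :: "'a set \<Rightarrow> ('a \<times> 'a) set \<Rightarrow> ('a \<times> 'a \<Rightarrow> nat) \<Rightarrow> bool" where
  "strongly_rainbow_connected V A c \<longleftrightarrow>
     (\<forall>x\<in>V. \<forall>y\<in>V. x \<noteq> y \<longrightarrow>
        (\<exists>p. is_dipath V A p x y \<and> path_len p = didist V A x y \<and> rainbow c p))"

definition rc_star :: "'a set \<Rightarrow> ('a \<times> 'a) set \<Rightarrow> nat" where
  "rc_star V A = (LEAST k. \<exists>c. arc_colouring A k c \<and> rainbow_connected V A c)"

definition src_star :: "'a set \<Rightarrow> ('a \<times> 'a) set \<Rightarrow> nat" where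
  "src_star V A = (LEAST k. \<exists>c. arc_colouring A k c \<and> strongly_rainbow_connected V A c)"

end

theory Submission
  imports Defs
begin

text \<open>Every arc of \<open>C_n([k])\<close> jumps forward by \<open>1..k\<close> positions, so a walk of length \<open>l\<close> from
  \<open>x\<close> to \<open>y\<close> travels a distance congruent to \<open>y - x\<close> and at most \<open>k l\<close>: the distance from \<open>x\<close> to
  \<open>y\<close> is \<open>\<lceil>((y - x) mod n) / k\<rceil>\<close>.

  Upper bound: cut the cycle into the \<open>\<lceil>n/k\<rceil>\<close> blocks \<open>[i k, (i + 1) k)\<close> and colour each arc by
  the block of its tail. A shortest walk, suitably shifted, starts its arcs in strictly
  increasing blocks of the unrolled cycle, all before the block of its origin one round later,
  so it is rainbow.

  Lower bound: if \<open>K k < n\<close> colours suffice, the rainbow path from \<open>i\<close> to \<open>i - 1\<close> has at most \<open>K\<close>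
  arcs but must travel \<open>n - 1\<close>, so \<open>K k = n - 1\<close> and it consists of \<open>K\<close> jumps of exactly \<open>k\<close>.
  Along the cycle of \<open>k\<close>-jumps every \<open>K\<close> consecutive arcs then carry all \<open>K\<close> colours, so the
  colours repeat with period \<open>K\<close>, and also with period \<open>n\<close>. As \<open>K\<close> and \<open>n = K k + 1\<close> are
  coprime, all arcs get the same colour, which is absurd for \<open>K \<ge> 2\<close>.\<close>

section \<open>Paths, colourings and periodic sequences\<close>

lemma path_arcs_singleton [simp]: "path_arcs [a] = []"
  and path_arcs_Cons_Cons [simp]: "path_arcs (a # b # p) = (a, b) # path_arcs (b # p)"
  by (simp_all add: path_arcs_def)

lemma length_path_arcs: "length (path_arcs p) = length p - 1"
  by (simp add: path_arcs_def)

lemma nth_path_arcs: "j < length p - 1 \<Longrightarrow> path_arcs p ! j = (p ! j, p ! Suc j)"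
  by (simp add: path_arcs_def nth_tl)

lemma rainbow_path_len_le:
  assumes "rainbow c p" "set (path_arcs p) \<subseteq> A" "arc_colouring A K c"
  shows "path_len p \<le> K"
proof -
  have "distinct (map c (path_arcs p))"
    using assms(1) by (simp add: rainbow_def)
  then have "path_len p = card (set (map c (path_arcs p)))"
    using distinct_card by (metis length_map path_len_def length_path_arcs)
  also have "\<dots> \<le> card {1..K}"
    using assms(2,3) by (intro card_mono) (auto simp: arc_colouring_def)
  finally show ?thesis by simp
qed

lemma strongly_rainbow_connected_imp_rainbow_connected:
  "strongly_rainbow_connected V A c \<Longrightarrow> rainbow_connected V A c"
  unfolding strongly_rainbow_connected_def rainbow_connected_def by blast

lemma nat_ceiling_divide_le_iff:
  assumes "0 < k"
  shows "nat \<lceil>real n / real k\<rceil> \<le> K \<longleftrightarrow> n \<le> K * k"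
  using assms by (simp add: divide_le_eq flip: of_nat_mult)

lemma mod_add_diff_mod_int:
  assumes "i < n" "d < n"
  shows "(int ((i + d) mod n) - int i) mod int n = int d"
proof -
  have "(int ((i + d) mod n) - int i) mod int n = ((int i + int d) mod int n - int i) mod int n"
    by (simp add: zmod_int)
  also have "\<dots> = int d"
    using assms by (simp add: mod_diff_left_eq)
  finally show ?thesis .
qed

lemma inj_on_mod_of_strict_mono_on:
  fixes f :: "'a::linorder \<Rightarrow> nat"
  assumes mono: "strict_mono_on S f" and spread: "\<And>i j. i \<in> S \<Longrightarrow> j \<in> S \<Longrightarrow> f j < f i + n"
  shows "inj_on (\<lambda>i. f i mod n) S"
proof -
  have "f a mod n \<noteq> f b mod n" if "a \<in> S" "b \<in> S" "a < b" for a b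
  proof
    assume "f a mod n = f b mod n"
    moreover have "f a < f b"
      using strict_mono_onD[OF mono that] .
    ultimately obtain s where "f b = f a + n * s"
      by (elim mod_eq_nat2E) simp
    with \<open>f a < f b\<close> spread[OF that(1,2)] show False
      by (cases s) auto
  qed
  then show ?thesis
    by (intro inj_onI) (metis linorder_neqE)
qed

text \<open>A sequence whose windows of length \<open>K\<close> are injective with values in a \<open>K\<close>-set sees all
  of that set in every window, so the value leaving a window is the one entering the next.\<close>
lemma window_injective_shift_periodic:
  fixes g :: "nat \<Rightarrow> 'b"
  assumes "finite C" "card C \<le> K"
    and inj: "\<And>b. inj_on (\<lambda>j. g (b + j)) {..<K}"
    and range: "\<And>b. (\<lambda>j. g (b + j)) ` {..<K} \<subseteq> C"
  shows "g (a + K) = g a"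
proof (cases "K = 0")
  case False
  have "card ((\<lambda>j. g (Suc a + j)) ` {..<K}) = K"
    using card_image[OF inj[of "Suc a"]] by simp
  then have "(\<lambda>j. g (Suc a + j)) ` {..<K} = C"
    using card_seteq[OF assms(1) range[of "Suc a"]] assms(2) by simp
  moreover have "g a \<in> C"
    using range[of a] False by force
  ultimately obtain j where j: "j < K" "g a = g (Suc a + j)"
    by force
  have "j = K - 1"
  proof (rule ccontr)
    assume "j \<noteq> K - 1"
    then have "g (a + 0) = g (a + Suc j)" "Suc j \<in> {..<K}" "0 \<in> {..<K}"
      using j by auto
    then show False
      using inj_onD[OF inj] by fastforce
  qed
  then show ?thesis
    using j False by simp
qed simp

lemma periodic_coprime_periods_Suc:
  fixes g :: "nat \<Rightarrow> 'b"
  assumes per_p: "\<And>a. g (a + p) = g a" and per_q: "\<And>a. g (a + q) = g a"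
    and "coprime p q" "p \<noteq> 0"
  shows "g (Suc a) = g a"
proof -
  have multiple: "g (a + t * r) = g a" if per: "\<And>a. g (a + r) = g a" for r t a
  proof (induction t)
    case (Suc t)
    have "g (a + Suc t * r) = g ((a + t * r) + r)"
      by (simp add: algebra_simps)
    also have "\<dots> = g a"
      using per Suc by simp
    finally show ?case .
  qed simp
  obtain x y where "p * x = q * y + 1"
    using bezout_nat[OF assms(4), of q] assms(3) by (auto simp: coprime_iff_gcd_eq_1)
  then have shift: "Suc a + y * q = a + x * p"
    by (simp add: mult.commute)
  have "g (Suc a) = g (Suc a + y * q)"
    by (rule multiple[OF per_q, symmetric])
  also have "\<dots> = g a"
    unfolding shift using multiple[OF per_p] by simp
  finally show ?thesis .
qed

section \<open>Walks in \<open>C_n([k])\<close> and their displacement\<close>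

lemma circulant_arcs_interval_iff:
  assumes "0 < k" "k < n"
  shows "(i, j) \<in> circulant_arcs n {1..k} \<longleftrightarrow>
    i < n \<and> j < n \<and> 1 \<le> (int j - int i) mod int n \<and> (int j - int i) mod int n \<le> int k"
proof -
  have small: "int s mod int n = int s" if "s \<in> {1..k}" for s
    using assms that by auto
  show ?thesis
  proof
    assume "(i, j) \<in> circulant_arcs n {1..k}"
    then show "i < n \<and> j < n \<and> 1 \<le> (int j - int i) mod int n \<and> (int j - int i) mod int n \<le> int k"
      unfolding circulant_arcs_def using small by auto
  next
    assume h: "i < n \<and> j < n \<and> 1 \<le> (int j - int i) mod int n \<and> (int j - int i) mod int n \<le> int k"
    define s where "s = nat ((int j - int i) mod int n)"
    have "s \<in> {1..k}" using h s_def by auto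
    moreover have "(int j - int i) mod int n = int s mod int n"
      using h small[OF \<open>s \<in> {1..k}\<close>] s_def by auto
    ultimately show "(i, j) \<in> circulant_arcs n {1..k}"
      using h unfolding circulant_arcs_def by auto
  qed
qed

definition displacement :: "nat \<Rightarrow> nat list \<Rightarrow> int" where
  "displacement n p = (\<Sum>(a, b) \<leftarrow> path_arcs p. (int b - int a) mod int n)"

lemma displacement_singleton [simp]: "displacement n [a] = 0"
  and displacement_Cons_Cons [simp]:
    "displacement n (a # b # p) = (int b - int a) mod int n + displacement n (b # p)"
  by (simp_all add: displacement_def)

lemma circulant_walk_displacement:
  assumes "0 < k" "k < n" "a < n" "set (path_arcs (a # p)) \<subseteq> circulant_arcs n {1..k}"
  shows "(int a + displacement n (a # p)) mod int n = int (last (a # p))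
    \<and> 0 \<le> displacement n (a # p) \<and> displacement n (a # p) \<le> int k * int (length p)"
  using assms(3,4)
proof (induction p arbitrary: a)
  case (Cons b q)
  have "(a, b) \<in> circulant_arcs n {1..k}" and arcs: "set (path_arcs (b # q)) \<subseteq> circulant_arcs n {1..k}"
    using Cons.prems by auto
  then have b: "b < n" and jump: "0 \<le> (int b - int a) mod int n" "(int b - int a) mod int n \<le> int k"
    using circulant_arcs_interval_iff[OF assms(1,2)] by auto
  have "(int a + displacement n (a # b # q)) mod int n
      = ((int a + (int b - int a) mod int n) mod int n + displacement n (b # q)) mod int n"
    by (simp add: mod_add_left_eq add.assoc)
  also have "(int a + (int b - int a) mod int n) mod int n = int b"
    using b by (simp add: mod_add_right_eq)
  finally show ?case
    using Cons.IH[OF b arcs] jump by (simp add: algebra_simps)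
qed simp

lemma circulant_walk_max_displacement:
  assumes "0 < k" "k < n" "a < n" "set (path_arcs (a # p)) \<subseteq> circulant_arcs n {1..k}"
    and "displacement n (a # p) = int k * int (length p)"
  shows "j \<le> length p \<Longrightarrow> (a # p) ! j = (a + j * k) mod n"
  using assms(3-5)
proof (induction p arbitrary: a j)
  case (Cons b q)
  have "(a, b) \<in> circulant_arcs n {1..k}" and arcs: "set (path_arcs (b # q)) \<subseteq> circulant_arcs n {1..k}"
    using Cons.prems by auto
  then have b: "b < n" and jump: "(int b - int a) mod int n \<le> int k"
    using circulant_arcs_interval_iff[OF assms(1,2)] by auto
  have "displacement n (b # q) \<le> int k * int (length q)"
    using circulant_walk_displacement[OF assms(1,2) b arcs] by simp
  then have jump_k: "(int b - int a) mod int n = int k"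
    and rest: "displacement n (b # q) = int k * int (length q)"
    using Cons.prems(4) jump by (auto simp: algebra_simps)
  have "int b mod int n = (int a + int k) mod int n"
    using jump_k by (metis add.commute diff_add_cancel mod_add_left_eq)
  then have b_eq: "b = (a + k) mod n"
    using b by (metis mod_less of_nat_add of_nat_eq_iff zmod_int)
  show ?case
  proof (cases j)
    case (Suc i)
    then have "(a # b # q) ! j = (b + i * k) mod n"
      using Cons.IH[OF _ b arcs rest] Cons.prems(1) by simp
    also have "\<dots> = (a + k + i * k) mod n"
      using b_eq by (simp add: mod_add_left_eq)
    also have "\<dots> = (a + j * k) mod n"
      using Suc by (simp add: algebra_simps)
    finally show ?thesis .
  qed (use Cons.prems in simp)
qed simp

lemma circulant_dipath_displacement:
  assumes "0 < k" "k < n" "is_dipath {0..<n} (circulant_arcs n {1..k}) p x y"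
  shows "(int y - int x) mod int n \<le> displacement n p"
    and "displacement n p \<le> int k * int (path_len p)"
proof -
  obtain q where p: "p = x # q" and x: "x < n" and y: "last p = y"
    and arcs: "set (path_arcs (x # q)) \<subseteq> circulant_arcs n {1..k}"
    using assms(3) unfolding is_dipath_def by (cases p) auto
  note disp = circulant_walk_displacement[OF assms(1,2) x arcs]
  have "displacement n p mod int n = ((int x + displacement n p) mod int n - int x) mod int n"
    by (simp add: mod_diff_left_eq)
  also have "\<dots> = (int y - int x) mod int n"
    using disp p y by simp
  finally have "(int y - int x) mod int n = displacement n p mod int n" ..
  also have "\<dots> \<le> displacement n p"
    using disp p by (simp add: zmod_le_nonneg_dividend)
  finally show "(int y - int x) mod int n \<le> displacement n p" .
  show "displacement n p \<le> int k * int (path_len p)"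
    using disp p by (simp add: path_len_def)
qed

section \<open>Rainbow connection needs \<open>\<lceil>n/k\<rceil>\<close> colours\<close>

lemma rainbow_connected_few_colours_force_k_steps:
  assumes "0 < k" "k < n" "K * k < n" "i < n"
    and col: "arc_colouring (circulant_arcs n {1..k}) K c"
    and rc: "rainbow_connected {0..<n} (circulant_arcs n {1..k}) c"
  shows "K * k = n - 1 \<and> (\<exists>p. rainbow c p \<and> set (path_arcs p) \<subseteq> circulant_arcs n {1..k}
    \<and> path_len p = K \<and> (\<forall>j \<le> K. p ! j = (i + j * k) mod n))"
proof -
  define y where "y = (i + (n - 1)) mod n"
  have y_diff: "(int y - int i) mod int n = int n - 1"
    using mod_add_diff_mod_int[of i n "n - 1"] assms(2,4) by (simp add: y_def of_nat_diff)
  then have "y \<noteq> i" "y < n"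
    using assms(1,2) by (auto simp: y_def)
  then have "\<exists>p. is_dipath {0..<n} (circulant_arcs n {1..k}) p i y \<and> rainbow c p"
    using rc assms(4) unfolding rainbow_connected_def by simp
  then obtain p where p: "is_dipath {0..<n} (circulant_arcs n {1..k}) p i y" "rainbow c p"
    by blast
  have arcs: "set (path_arcs p) \<subseteq> circulant_arcs n {1..k}"
    using p(1) by (simp add: is_dipath_def)
  have "path_len p * k \<le> K * k"
    using rainbow_path_len_le[OF p(2) arcs col] by (rule mult_le_mono1)
  then have len_le: "int k * int (path_len p) \<le> int K * int k"
    by (metis of_nat_le_iff of_nat_mult mult.commute)
  have "int K * int k \<le> int n - 1"
    using assms(3) by (metis of_nat_less_iff of_nat_mult zle_diff1_eq)
  with len_le y_diff circulant_dipath_displacement[OF assms(1,2) p(1)]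
  have disp: "displacement n p = int k * int (path_len p)"
    and "int k * int (path_len p) = int K * int k" and Kk: "int K * int k = int n - 1"
    by linarith+
  then have "k * path_len p = k * K"
    by (simp only: mult.commute[of K] flip: of_nat_mult of_nat_eq_iff)
  then have len: "path_len p = K"
    using assms(1) by simp
  have "K * k = n - 1"
    using Kk assms(2) by (simp add: of_nat_diff flip: of_nat_mult)
  obtain q where q: "p = i # q"
    using p(1) unfolding is_dipath_def by (cases p) auto
  have "\<forall>j \<le> K. p ! j = (i + j * k) mod n"
    using circulant_walk_max_displacement[OF assms(1,2,4), of q] arcs disp len q
    by (simp add: path_len_def)
  with \<open>K * k = n - 1\<close> p(2) arcs len show ?thesis
    by blast
qed

lemma k_step_rainbow_windows:
  assumes "0 < n" and col: "arc_colouring A K c"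
    and paths: "\<And>i. i < n \<Longrightarrow> \<exists>p. rainbow c p \<and> set (path_arcs p) \<subseteq> A \<and> path_len p = K
      \<and> (\<forall>j \<le> K. p ! j = (i + j * k) mod n)"
  shows "inj_on (\<lambda>j. c ((b + j) * k mod n, Suc (b + j) * k mod n)) {..<K}
    \<and> (\<lambda>j. c ((b + j) * k mod n, Suc (b + j) * k mod n)) ` {..<K} \<subseteq> {1..K}"
proof -
  obtain p where p: "rainbow c p" "set (path_arcs p) \<subseteq> A" "path_len p = K"
    "\<forall>j \<le> K. p ! j = (b * k mod n + j * k) mod n"
    using paths[of "b * k mod n"] assms(1) by auto
  have len: "length (path_arcs p) = K"
    using p(3) by (simp add: path_len_def length_path_arcs)
  have vertex: "p ! j = (b + j) * k mod n" if "j \<le> K" for j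
    using p(4) that by (metis add_mult_distrib mod_add_left_eq)
  have "path_arcs p ! j = ((b + j) * k mod n, Suc (b + j) * k mod n)" if "j < K" for j
    using nth_path_arcs[of j p] vertex[of j] vertex[of "Suc j"] that p(3)
    by (simp add: path_len_def)
  then have arcs: "path_arcs p = map (\<lambda>j. ((b + j) * k mod n, Suc (b + j) * k mod n)) [0..<K]"
    by (intro nth_equalityI) (simp_all add: len)
  have "distinct (map c (path_arcs p))"
    using p(1) by (simp add: rainbow_def)
  then have "inj_on (\<lambda>j. c ((b + j) * k mod n, Suc (b + j) * k mod n)) {..<K}"
    by (simp add: arcs distinct_map atLeast0LessThan comp_def)
  moreover have "c ` set (path_arcs p) \<subseteq> {1..K}"
    using p(2) col by (auto simp: arc_colouring_def)
  ultimately show ?thesis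
    by (simp add: arcs atLeast0LessThan image_image)
qed

lemma rainbow_connected_circulant_colours_ge:
  assumes "0 < k" "k + 2 \<le> n"
    and col: "arc_colouring (circulant_arcs n {1..k}) K c"
    and rc: "rainbow_connected {0..<n} (circulant_arcs n {1..k}) c"
  shows "n \<le> K * k"
proof (rule ccontr)
  assume "\<not> n \<le> K * k"
  then have few: "K * k < n" and "k < n"
    using assms(2) by simp_all
  note forced = rainbow_connected_few_colours_force_k_steps[OF assms(1) \<open>k < n\<close> few _ col rc]
  have n_eq: "n = K * k + 1"
    using forced[of 0] few by simp
  have paths: "\<exists>p. rainbow c p \<and> set (path_arcs p) \<subseteq> circulant_arcs n {1..k} \<and> path_len p = K
      \<and> (\<forall>j \<le> K. p ! j = (i + j * k) mod n)" if "i < n" for i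
    using forced[OF that] by (rule conjunct2)
  have "k < K * k"
    using n_eq assms(2) by linarith
  then have "1 < K"
    by simp
  define g where "g b = c (b * k mod n, Suc b * k mod n)" for b
  have windows: "inj_on (\<lambda>j. g (b + j)) {..<K} \<and> (\<lambda>j. g (b + j)) ` {..<K} \<subseteq> {1..K}" for b
    unfolding g_def using k_step_rainbow_windows[OF _ col paths] few by simp
  have "g (a + K) = g a" for a
    using window_injective_shift_periodic[of "{1..K}" K g] windows by simp
  moreover have "g (a + n) = g a" for a
  proof -
    have "(b + n) * k mod n = b * k mod n" for b
      by (simp add: add_mult_distrib)
    then show ?thesis
      by (simp only: g_def add_Suc[symmetric])
  qed
  moreover have "coprime K n"
    unfolding n_eq by (metis coprime_mult_left_iff coprime_add_one_right)
  ultimately have "g (Suc 0) = g 0"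
    using periodic_coprime_periods_Suc[of g K n 0] \<open>1 < K\<close> by simp
  moreover have "g (0 + 0) \<noteq> g (0 + 1)"
    using windows[of 0] \<open>1 < K\<close> inj_onD[of "\<lambda>j. g (0 + j)" "{..<K}" 0 1] by auto
  ultimately show False
    by simp
qed

section \<open>The block colouring\<close>

locale circulant_blocks =
  fixes n k m :: nat
  assumes k_pos: "0 < k" and k_less: "k < n" and n_le: "n \<le> m * k"
begin

definition block_colour :: "nat \<times> nat \<Rightarrow> nat" where
  "block_colour = (\<lambda>(u, v). u div k + 1)"

text \<open>Numbers the blocks of two consecutive copies of the cycle, the second one being shifted by
  \<open>m\<close> (its last block may be shorter than \<open>k\<close>): position \<open>P < 2 n\<close> lies in a block of colour
  \<open>rank P mod m\<close>.\<close>
definition rank :: "nat \<Rightarrow> nat" where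
  "rank P = (if P < n then P div k else m + (P - n) div k)"

lemma div_less_blocks: "P < n \<Longrightarrow> P div k < m"
  using n_le k_pos by (simp add: div_less_iff_less_mult)

lemma arc_colouring_block_colour: "arc_colouring (circulant_arcs n {1..k}) m block_colour"
  unfolding arc_colouring_def block_colour_def circulant_arcs_def
  using div_less_blocks by (auto simp: Suc_le_eq)

lemma block_colour_rank: "P < 2 * n \<Longrightarrow> P mod n div k = rank P mod m"
  using div_less_blocks[of P] div_less_blocks[of "P - n"]
  by (auto simp: rank_def le_mod_geq)

lemma rank_less_of_add_le:
  assumes "P + k \<le> Q"
  shows "rank P < rank Q"
proof -
  consider "Q < n" | "P < n" "n \<le> Q" | "n \<le> P"
    using assms by linarith
  then show ?thesis
  proof cases
    case 1
    moreover have "P < n"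
      using 1 assms by linarith
    ultimately show ?thesis
      using div_le_mono[OF assms, of k] k_pos by (simp add: rank_def)
  next
    case 2
    then show ?thesis
      using div_less_blocks[of P] by (simp add: rank_def)
  next
    case 3
    have "(P - n) div k + 1 = (P - n + k) div k"
      using k_pos by simp
    also have "\<dots> \<le> (Q - n) div k"
      using assms 3 by (intro div_le_mono) linarith
    finally show ?thesis
      using 3 assms by (simp add: rank_def)
  qed
qed

lemma rank_less_of_next_block:
  assumes "P < n" "(P div k + 1) * k \<le> Q"
  shows "rank P < rank Q"
proof (cases "Q < n")
  case True
  have "(P div k + 1) * k div k \<le> Q div k"
    using assms by (intro div_le_mono) simp
  then show ?thesis
    using True assms(1) k_pos by (simp add: rank_def)
qed (use assms div_less_blocks[of P] in \<open>simp add: rank_def\<close>)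

lemma rank_less_bound:
  assumes "Q < n + a * k"
  shows "rank Q < a + m"
proof (cases "Q < n")
  case False
  then have "(Q - n) div k < a"
    using assms k_pos by (simp add: div_less_iff_less_mult)
  with False show ?thesis
    by (simp add: rank_def)
qed (use div_less_blocks[of Q] in \<open>simp add: rank_def\<close>)

end

locale block_walk = circulant_blocks +
  fixes x D :: nat
  assumes x_less: "x < n" and D_pos: "0 < D" and D_less: "D < n"
begin

definition steps :: nat where
  "steps = (D + k - 1) div k"

definition offset :: nat where
  "offset = min (steps * k - D) (x mod k)"

text \<open>The vertices of a shortest walk from \<open>x\<close> to \<open>x + D\<close>, as positions on the unrolled cycle.
  Shifting the grid of \<open>k\<close>-steps back by \<open>offset\<close> makes the first step leave the block of \<open>x\<close>,
  while the last step still starts before the block of \<open>x\<close> one round later.\<close>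
definition walk :: "nat \<Rightarrow> nat" where
  "walk j = (if j = 0 then x else min (x + j * k - offset) (x + D))"

lemma steps_bounds: "D \<le> steps * k" "steps * k < D + k" "(steps - 1) * k < D" "0 < steps"
proof -
  have "steps * k + (D + k - 1) mod k = D + k - 1"
    unfolding steps_def by (rule div_mult_mod_eq)
  moreover have "(D + k - 1) mod k < k"
    using k_pos by simp
  ultimately show "D \<le> steps * k" "steps * k < D + k"
    using D_pos by linarith+
  then show "0 < steps"
    using D_pos by (cases steps) auto
  then show "(steps - 1) * k < D"
    using \<open>steps * k < D + k\<close> by (cases steps) auto
qed

lemma offset_bounds: "offset + D \<le> steps * k" "offset \<le> x mod k" "offset < k"
  using steps_bounds(1,2) by (auto simp: offset_def)

lemma walk_0: "walk 0 = x"
  by (simp add: walk_def)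

lemma walk_steps: "walk steps = x + D"
  using steps_bounds(4) offset_bounds(1) by (simp add: walk_def)

lemma inner_step_less:
  assumes "j < steps"
  shows "j * k < D"
proof -
  have "j * k \<le> (steps - 1) * k"
    using assms by (intro mult_le_mono1) simp
  then show ?thesis
    using steps_bounds(3) by (rule le_less_trans)
qed

lemma walk_inner: "0 < j \<Longrightarrow> j < steps \<Longrightarrow> walk j = x + j * k - offset"
  using inner_step_less[of j] by (simp add: walk_def)

lemma walk_step:
  assumes "j < steps"
  shows "walk j < walk (Suc j)" "walk (Suc j) \<le> walk j + k"
proof -
  have "walk j < walk (Suc j) \<and> walk (Suc j) \<le> walk j + k"
  proof (cases "j = 0")
    case True
    then show ?thesis
      using walk_inner[of 1] walk_steps D_pos steps_bounds(1) offset_bounds(3) assms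
      by (cases "steps = 1") (auto simp: walk_0)
  next
    case False
    then have "k \<le> j * k" "j * k < D"
      using inner_step_less assms by auto
    with False assms offset_bounds(3) k_pos show ?thesis
      by (auto simp: walk_inner walk_def min_def)
  qed
  then show "walk j < walk (Suc j)" "walk (Suc j) \<le> walk j + k"
    by simp_all
qed

lemma strict_mono_on_walk: "strict_mono_on {..steps} walk"
proof (rule strict_mono_onI)
  fix i j
  assume "j \<in> {..steps}" "i < j"
  then have "{i..<j} \<subseteq> {..<steps}"
    by auto
  show "walk i < walk j"
    by (rule lift_Suc_mono_less_ivl[OF _ \<open>i < j\<close> \<open>{i..<j} \<subseteq> {..<steps}\<close>]) (simp add: walk_step(1))
qed

lemma walk_range: "j \<le> steps \<Longrightarrow> x \<le> walk j \<and> walk j \<le> x + D"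
  using strict_mono_onD[OF strict_mono_on_walk, of 0 j] strict_mono_onD[OF strict_mono_on_walk, of j steps]
  by (cases "j = 0"; cases "j = steps") (auto simp: walk_0 walk_steps)

definition walk_path :: "nat list" where
  "walk_path = map (\<lambda>j. walk j mod n) [0..<Suc steps]"

lemma length_walk_path: "length walk_path = Suc steps"
  by (simp add: walk_path_def)

lemma path_len_walk_path: "path_len walk_path = steps"
  by (simp add: length_walk_path path_len_def)

lemma nth_path_arcs_walk_path:
  "j < steps \<Longrightarrow> path_arcs walk_path ! j = (walk j mod n, walk (Suc j) mod n)"
  using nth_path_arcs[of j walk_path] by (simp add: walk_path_def nth_append del: upt_Suc)

lemma path_arcs_walk_path:
  "path_arcs walk_path = map (\<lambda>j. (walk j mod n, walk (Suc j) mod n)) [0..<steps]"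
  by (rule nth_equalityI) (simp_all add: length_path_arcs length_walk_path nth_path_arcs_walk_path)

lemma walk_arc:
  assumes "j < steps"
  shows "(walk j mod n, walk (Suc j) mod n) \<in> circulant_arcs n {1..k}"
proof -
  have "(int (walk (Suc j) mod n) - int (walk j mod n)) mod int n
      = (int (walk (Suc j)) - int (walk j)) mod int n"
    by (simp add: zmod_int mod_diff_eq)
  also have "\<dots> = int (walk (Suc j)) - int (walk j)"
    using walk_step[OF assms] k_less by (intro mod_pos_pos_trivial) auto
  finally show ?thesis
    unfolding circulant_arcs_interval_iff[OF k_pos k_less] using walk_step[OF assms] k_less by simp
qed

lemma is_dipath_walk_path: "is_dipath {0..<n} (circulant_arcs n {1..k}) walk_path x ((x + D) mod n)"
proof -
  have "walk j < walk i + n" if "i \<in> {..steps}" "j \<in> {..steps}" for i j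
    using walk_range[of i] walk_range[of j] that D_less by auto
  then have "inj_on (\<lambda>j. walk j mod n) {..steps}"
    by (rule inj_on_mod_of_strict_mono_on[OF strict_mono_on_walk])
  then have "distinct walk_path"
    by (simp add: walk_path_def distinct_map atLeast0LessThan lessThan_Suc_atMost del: upt_Suc)
  moreover have "set (path_arcs walk_path) \<subseteq> circulant_arcs n {1..k}"
    using walk_arc by (auto simp: path_arcs_walk_path)
  ultimately show ?thesis
    using x_less k_less walk_0 walk_steps
    by (auto simp: is_dipath_def walk_path_def last_map hd_map simp del: upt_Suc)
qed

lemma rank_walk_step:
  assumes "Suc j < steps"
  shows "rank (walk j) < rank (walk (Suc j))"
proof (cases "j = 0")
  case True
  have "walk 1 = x + k - offset"
    using walk_inner[of 1] assms True by simp
  moreover have "(x div k + 1) * k = x div k * k + k"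
    by simp
  ultimately have "(x div k + 1) * k \<le> walk 1"
    using div_mult_mod_eq[of x k] offset_bounds(2,3) by linarith
  then show ?thesis
    using rank_less_of_next_block[OF x_less] True by (simp add: walk_0)
next
  case False
  then have "k \<le> j * k"
    by simp
  moreover have "Suc j * k = j * k + k"
    by simp
  ultimately have "walk (Suc j) = walk j + k"
    using walk_inner[of j] walk_inner[of "Suc j"] False assms offset_bounds(3) by linarith
  then show ?thesis
    by (simp add: rank_less_of_add_le)
qed

lemma strict_mono_on_rank_walk: "strict_mono_on {..<steps} (\<lambda>j. rank (walk j))"
proof (rule strict_mono_onI)
  fix i j
  assume "j \<in> {..<steps}" "i < j"
  then have "{i..<j} \<subseteq> {..<steps - 1}"
    by auto
  show "rank (walk i) < rank (walk j)"
    by (rule lift_Suc_mono_less_ivl[OF _ \<open>i < j\<close> \<open>{i..<j} \<subseteq> {..<steps - 1}\<close>])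
      (simp add: rank_walk_step)
qed

lemma last_inner_walk_less: "walk (steps - 1) < n + x div k * k"
proof (cases "steps = 1")
  case False
  then have "1 \<le> steps - 1"
    using steps_bounds(4) by linarith
  then have "k \<le> (steps - 1) * k"
    using mult_le_mono1[of 1 "steps - 1" k] by simp
  then have "walk (steps - 1) + offset = x + (steps - 1) * k"
    using walk_inner[of "steps - 1"] False steps_bounds(4) offset_bounds(3) by linarith
  moreover have "steps * k = (steps - 1) * k + k"
    using steps_bounds(4) by (cases steps) auto
  moreover have "offset = steps * k - D \<or> offset = x mod k"
    by (simp add: offset_def min_def)
  ultimately show ?thesis
    using div_mult_mod_eq[of x k] mod_less_divisor[OF k_pos, of x] steps_bounds(1,3) D_less
    by (elim disjE) linarith+
qed (use walk_0 x_less in simp)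

lemma rank_walk_bounds:
  assumes "j < steps"
  shows "x div k \<le> rank (walk j)" "rank (walk j) < x div k + m"
proof -
  have "rank (walk 0) \<le> rank (walk j)"
    using strict_mono_onD[OF strict_mono_on_rank_walk, of 0 j] assms by (cases j) auto
  then show "x div k \<le> rank (walk j)"
    using x_less by (simp add: walk_0 rank_def)
  have "walk j \<le> walk (steps - 1)"
  proof (cases "j < steps - 1")
    case True
    then show ?thesis
      using strict_mono_onD[OF strict_mono_on_walk, of j "steps - 1"] less_imp_le[OF assms] by simp
  next
    case False
    then have "j = steps - 1"
      using assms by linarith
    then show ?thesis
      by simp
  qed
  then show "rank (walk j) < x div k + m"
    using last_inner_walk_less by (intro rank_less_bound) simp
qed

lemma rainbow_walk_path: "rainbow block_colour walk_path"
proof -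
  have "inj_on (\<lambda>j. rank (walk j) mod m) {..<steps}"
    using rank_walk_bounds
    by (intro inj_on_mod_of_strict_mono_on[OF strict_mono_on_rank_walk]) fastforce
  moreover have "walk j mod n div k = rank (walk j) mod m" if "j < steps" for j
    using walk_range[of j] that x_less D_less by (intro block_colour_rank) simp
  ultimately have "inj_on (\<lambda>j. walk j mod n div k + 1) {..<steps}"
    by (auto simp: inj_on_def)
  then show ?thesis
    by (simp add: rainbow_def path_arcs_walk_path block_colour_def distinct_map comp_def
        atLeast0LessThan)
qed

lemma didist_eq_steps: "didist {0..<n} (circulant_arcs n {1..k}) x ((x + D) mod n) = steps"
  unfolding didist_def
proof (rule Least_equality)
  show "\<exists>p. is_dipath {0..<n} (circulant_arcs n {1..k}) p x ((x + D) mod n) \<and> path_len p = steps"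
    using is_dipath_walk_path path_len_walk_path by auto
next
  fix l
  assume "\<exists>p. is_dipath {0..<n} (circulant_arcs n {1..k}) p x ((x + D) mod n) \<and> path_len p = l"
  then have "int D \<le> int k * int l"
    using circulant_dipath_displacement[OF k_pos k_less] mod_add_diff_mod_int[OF x_less D_less]
    by fastforce
  then have "D \<le> l * k"
    by (simp add: mult.commute flip: of_nat_mult)
  then have "(steps - 1) * k < l * k"
    using steps_bounds(3) by linarith
  then have "steps - 1 < l"
    by simp
  then show "steps \<le> l"
    by linarith
qed

end

lemma (in circulant_blocks) strongly_rainbow_connected_block_colour:
  "strongly_rainbow_connected {0..<n} (circulant_arcs n {1..k}) block_colour"
  unfolding strongly_rainbow_connected_def
proof (intro ballI impI)
  fix x y
  assume x: "x \<in> {0..<n}" and y: "y \<in> {0..<n}" and "x \<noteq> y"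
  define D where "D = nat ((int y - int x) mod int n)"
  have D: "int D = (int y - int x) mod int n"
    using k_less by (simp add: D_def)
  then have "int ((x + D) mod n) = (int x + (int y - int x)) mod int n"
    by (simp add: zmod_int mod_add_right_eq)
  then have y_eq: "(x + D) mod n = y"
    using y by simp
  then have "0 < D"
    using x \<open>x \<noteq> y\<close> by (cases D) auto
  moreover have "int D < int n"
    unfolding D using k_less by simp
  then have "D < n"
    by simp
  ultimately interpret block_walk n k m x D
    using x by unfold_locales simp_all
  show "\<exists>p. is_dipath {0..<n} (circulant_arcs n {1..k}) p x y
      \<and> path_len p = didist {0..<n} (circulant_arcs n {1..k}) x y \<and> rainbow block_colour p"
    using is_dipath_walk_path path_len_walk_path didist_eq_steps rainbow_walk_path y_eq by auto
qed

theorem theorem6: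
  fixes n k :: nat
  assumes "n \<ge> 3" and "1 \<le> k" and "k \<le> n - 2"
  shows "rc_star (circulant_verts n) (circulant_arcs n {1..k}) = nat \<lceil>real n / real k\<rceil>
       \<and> src_star (circulant_verts n) (circulant_arcs n {1..k}) = nat \<lceil>real n / real k\<rceil>"
proof -
  define m where "m = nat \<lceil>real n / real k\<rceil>"
  define V where "V = circulant_verts n"
  define A where "A = circulant_arcs n {1..k}"
  have k: "0 < k" "k < n" "k + 2 \<le> n"
    using assms by linarith+
  note m_le_iff = nat_ceiling_divide_le_iff[OF k(1), of n, folded m_def]
  interpret circulant_blocks n k m
    using k m_le_iff[of m] by unfold_locales simp_all
  have V: "V = {0..<n}"
    by (simp add: V_def circulant_verts_def)
  have witness: "arc_colouring A m block_colour \<and> strongly_rainbow_connected V A block_colour"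
    using arc_colouring_block_colour strongly_rainbow_connected_block_colour by (simp add: V A_def)
  have lower: "m \<le> K" if "arc_colouring A K c" "rainbow_connected V A c" for K c
    using rainbow_connected_circulant_colours_ge[OF k(1,3)] that m_le_iff by (simp add: V A_def)
  have "rc_star V A = m"
    unfolding rc_star_def
    by (rule Least_equality) (use witness strongly_rainbow_connected_imp_rainbow_connected lower in blast)+
  moreover have "src_star V A = m"
    unfolding src_star_def
    by (rule Least_equality) (use witness strongly_rainbow_connected_imp_rainbow_connected lower in blast)+
  ultimately show ?thesis
    by (simp add: m_def V_def A_def)
qed

end
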